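(* Let $n\ge 1$, let $\delta_t>0$, and let $\mathbf{K}\in\mathbb{R}^{n\times n}$ be a real symmetric matrix all of whose eigenvalues $\lambda_{\mathbf{K},1},\dots,\lambda_{\mathbf{K},n}$ are strictly positive; let $\overline{\lambda}_{\mathbf{K}}=\max_j \lambda_{\mathbf{K},j}$. Let $\mathbf{B}\in\mathbb{R}^n$ and let $\alpha,\beta\in\mathbb{R}$. Consider the discrete-time linear system (for $\mathbf{Y}[m]\in\mathbb{R}^n$, scalar input $y_d[m]$) $$\mathbf{Y}[m+1]=\mathbf{Y}[m]-\alpha\beta\delta_t\mathbf{K}\mathbf{Y}[m]+\alpha\beta\delta_t\mathbf{B}\,y_d[m]+(\mathbf{I}-\beta\mathbf{K})\big(\mathbf{Y}[m]-\mathbf{Y}[m-1]\big).$$ Then this system is (asymptotically) stable, i.e. every root $z$ of $$\det\Big(\mathbf{I}z^2-\big(\mathbf{I}-\alpha\beta\delta_t\mathbf{K}+(\mathbf{I}-\beta\mathbf{K})\big)z+(\mathbf{I}-\beta\mathbf{K})\Big)=0$$ satisfies $|z|<1$ (equivalently, for every eigenvalue $\lambda=\lambda_{\mathbf{K},k}$, both roots of $z^2-\big(1-\alpha\beta\delta_t\lambda+(1-\beta\lambda)\big)z+(1-\beta\lambda)=0$ lie in the open unit disk), if and only if $$\text{(i)}\ \ \alpha>0\qquad\text{and}\qquad \text{(ii)}\ \ 0<\beta<\frac{4}{\overline{\lambda}_{\mathbf{K}}\,(\alpha\delta_t+2)}.$$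
   Context: In the paper, $\mathbf{K}$ is the pinned Laplacian of a network of $n$ robots attached to a flexible object: $\mathbf{K}_{k,k}=\hat{k}_{k,d}+\sum_{m}\hat{k}_{k,m}$ and $\mathbf{K}_{k,j}=-\hat{k}_{k,j}$ for $k\neq j$, where $\hat{k}_{k,j}=\hat{k}_{j,k}\ge 0$ are effective stiffnesses (with $\hat{k}_{j,j}=0$) and $\hat{k}_{k,d}\ge0$ is nonzero only for leader robots; it is assumed to have real strictly positive eigenvalues. $\mathbf{B}$ has entries $B_k=\hat{k}_{k,d}$, $\mathbf{Y}$ is the vector of robot positions, $y_d$ the desired position, $\delta_t>0$ the sampling period, and $\alpha,\beta$ are the gains of the delayed-self-reinforcement update. Stability refers to the homogeneous recurrence (input $y_d$ irrelevant), i.e. all characteristic roots strictly inside the unit circle. *)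

theory Defs
  imports "HOL-Analysis.Analysis"
begin

definition real_eigenvalues :: "real^'n^'n \<Rightarrow> real set" where
  "real_eigenvalues K = {l. \<exists>v::real^'n. v \<noteq> 0 \<and> K *v v = l *s v}"

definition max_eigenvalue :: "real^'n^'n \<Rightarrow> real" where
  "max_eigenvalue K = Max (real_eigenvalues K)"

definition cmat :: "real^'n^'n \<Rightarrow> complex^'n^'n" where
  "cmat K = (\<chi> i j. complex_of_real (K $ i $ j))"

text \<open>The characteristic matrix polynomial of the second order recurrence
  Y[m+1] = Y[m] - a b dt K Y[m] + a b dt B yd[m] + (I - b K)(Y[m] - Y[m-1]):
  I z^2 - (I - a b dt K + (I - b K)) z + (I - b K).\<close>
definition dsr_char_matrix ::
  "real \<Rightarrow> real \<Rightarrow> real \<Rightarrow> real^'n^'n \<Rightarrow> complex \<Rightarrow> complex^'n^'n" where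
  "dsr_char_matrix a b dt K z =
     mat (z^2)
     - mat z ** (mat 1 - mat (complex_of_real (a * b * dt)) ** cmat K
                 + (mat 1 - mat (complex_of_real b) ** cmat K))
     + (mat 1 - mat (complex_of_real b) ** cmat K)"

definition dsr_stable :: "real \<Rightarrow> real \<Rightarrow> real \<Rightarrow> real^'n^'n \<Rightarrow> bool" where
  "dsr_stable a b dt K \<longleftrightarrow>
     (\<forall>z::complex. det (dsr_char_matrix a b dt K z) = 0 \<longrightarrow> cmod z < 1)"

end

theory Submission
  imports Defs
begin

(* The characteristic matrix equals (z - 1)^2 I + s(z) K with s(z) = (alpha beta dt + beta) z - beta,
   a polynomial in K. As K is real symmetric, all complex eigenvalues of K are real, so the
   characteristic roots are exactly the roots of the scalar quadratics
   z^2 + (l (alpha beta dt + beta) - 2) z + (1 - l beta), l an eigenvalue of K.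
   Jury's criterion for a monic real quadratic z^2 + p z + q (|q| < 1 and 1 +- p + q > 0) turns
   stability of each of them into alpha > 0, beta > 0 and l beta (alpha dt + 2) < 4, and the last
   condition holds for all eigenvalues iff it holds for the largest one. *)

lemma real_pair_in_unit_interval_iff:
  fixes x r :: real
  shows "\<bar>x\<bar> < 1 \<and> \<bar>r\<bar> < 1 \<longleftrightarrow>
         \<bar>x * r\<bar> < 1 \<and> (1 - x) * (1 - r) > 0 \<and> (1 + x) * (1 + r) > 0"
proof
  assume "\<bar>x\<bar> < 1 \<and> \<bar>r\<bar> < 1"
  then show "\<bar>x * r\<bar> < 1 \<and> (1 - x) * (1 - r) > 0 \<and> (1 + x) * (1 + r) > 0"
    by (auto simp: abs_mult abs_less_iff intro: abs_mult_less[of _ 1 _ 1, simplified])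
next
  assume conds: "\<bar>x * r\<bar> < 1 \<and> (1 - x) * (1 - r) > 0 \<and> (1 + x) * (1 + r) > 0"
  have "\<bar>x\<bar> < 1" if H: "\<bar>x * r\<bar> < 1" "(1 - x) * (1 - r) > 0" "(1 + x) * (1 + r) > 0" for x r :: real
  proof (rule ccontr)
    assume "\<not> \<bar>x\<bar> < 1"
    then have "\<bar>r\<bar> < 1"
      using H(1) by (metis abs_mult leI less_le_trans mult_le_cancel_left1 not_less abs_ge_zero mult.commute)
    then have "1 - x > 0" "1 + x > 0"
      using H(2,3) by (auto simp: zero_less_mult_iff)
    with \<open>\<not> \<bar>x\<bar> < 1\<close> show False by auto
  qed
  from this[of x r] this[of r x] conds show "\<bar>x\<bar> < 1 \<and> \<bar>r\<bar> < 1"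
    by (simp_all add: mult.commute)
qed

lemma monic_quadratic_roots_in_unit_disc_iff:
  fixes p q :: real
  shows "(\<forall>z::complex. z^2 + of_real p * z + of_real q = 0 \<longrightarrow> cmod z < 1) \<longleftrightarrow>
         \<bar>q\<bar> < 1 \<and> 1 + p + q > 0 \<and> 1 - p + q > 0"
proof (cases "4 * q \<le> p^2")
  case True
  define s where "s = sqrt (p^2 - 4 * q)"
  define x r where "x = (s - p) / 2" and "r = (- s - p) / 2"
  have "s^2 = p^2 - 4 * q"
    using True by (simp add: s_def)
  then have prod: "x * r = q" and sum: "p = - (x + r)"
    by (simp_all add: x_def r_def field_simps power2_eq_square)
  have "z^2 + of_real p * z + of_real q = (z - of_real x) * (z - of_real r)" for z :: complex
    unfolding sum prod[symmetric] by (simp add: power2_eq_square algebra_simps)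
  then have "(\<forall>z::complex. z^2 + of_real p * z + of_real q = 0 \<longrightarrow> cmod z < 1) \<longleftrightarrow>
      \<bar>x\<bar> < 1 \<and> \<bar>r\<bar> < 1"
    by auto
  also have "\<dots> \<longleftrightarrow> \<bar>q\<bar> < 1 \<and> 1 + p + q > 0 \<and> 1 - p + q > 0"
    unfolding real_pair_in_unit_interval_iff sum prod[symmetric] by (simp add: algebra_simps)
  finally show ?thesis .
next
  case False
  define y where "y = sqrt (q - p^2 / 4)"
  have y2: "y^2 = q - p^2 / 4"
    using False by (simp add: y_def)
  define w where "w = Complex (- p / 2) y"
  have norm_w: "(cmod w)^2 = q"
    by (simp add: w_def cmod_power2 y2 power_divide)
  have "z^2 + of_real p * z + of_real q = (z - w) * (z - cnj w)" for z
  proof -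
    have "(z - w) * (z - cnj w) = z^2 - (w + cnj w) * z + w * cnj w"
      by (simp add: power2_eq_square algebra_simps)
    also have "w + cnj w = - of_real p"
      by (simp add: complex_add_cnj w_def)
    also have "w * cnj w = of_real q"
      by (simp add: complex_mult_cnj w_def y2 power_divide)
    finally show ?thesis
      by simp
  qed
  then have "(\<forall>z::complex. z^2 + of_real p * z + of_real q = 0 \<longrightarrow> cmod z < 1) \<longleftrightarrow> cmod w < 1"
    by auto
  also have "\<dots> \<longleftrightarrow> q < 1"
    using abs_square_less_1[of "cmod w"] norm_w by simp
  also have "\<dots> \<longleftrightarrow> \<bar>q\<bar> < 1 \<and> 1 + p + q > 0 \<and> 1 - p + q > 0"
  proof -
    have "0 \<le> (1 + p / 2)^2" "0 \<le> (1 - p / 2)^2" by simp_all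
    then show ?thesis
      using False by (auto simp: power2_eq_square algebra_simps)
  qed
  finally show ?thesis .
qed

lemma nonneg_quadratic_imp_linear_coeff_eq_0:
  fixes b c :: real
  assumes "\<And>t. 0 \<le> b * t + c * t^2"
  shows "b = 0"
proof (rule ccontr)
  assume "b \<noteq> 0"
  define d where "d = \<bar>c\<bar> + 1"
  define t where "t = - b / d"
  have "d > 0"
    by (simp add: d_def add_nonneg_pos)
  have "b * t + c * t^2 \<le> b * t + (d - 1) * t^2"
    by (simp add: d_def mult_right_mono)
  also have "\<dots> = - (b^2) / d^2"
    using \<open>d > 0\<close> by (simp add: t_def field_simps power2_eq_square)
  also have "\<dots> < 0"
    using \<open>b \<noteq> 0\<close> \<open>d > 0\<close> by simp
  finally show False
    using assms[of t] by simp
qed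

lemma symmetric_matrix_inner:
  fixes K :: "real^'n^'n"
  assumes "transpose K = K"
  shows "(K *v x) \<bullet> y = x \<bullet> (K *v y)"
  by (metis assms dot_lmul_matrix vector_transpose_matrix)

lemma Rayleigh_bound_attained_imp_eigenvector:
  fixes K :: "real^'n^'n"
  assumes sym: "transpose K = K"
    and bound: "\<And>x. x \<bullet> (K *v x) \<le> l * (x \<bullet> x)"
    and attained: "v \<bullet> (K *v v) = l * (v \<bullet> v)"
  shows "K *v v = l *s v"
proof -
  define w where "w = l *\<^sub>R v - K *v v"
  have "0 \<le> 2 * (w \<bullet> w) * t + (l * (w \<bullet> w) - w \<bullet> (K *v w)) * t^2" for t
  proof -
    have "w \<bullet> (K *v v) = v \<bullet> (K *v w)"
      using symmetric_matrix_inner[OF sym, of v w] by (simp add: inner_commute)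
    then have "l * ((v + t *\<^sub>R w) \<bullet> (v + t *\<^sub>R w)) - (v + t *\<^sub>R w) \<bullet> (K *v (v + t *\<^sub>R w))
        = 2 * (w \<bullet> w) * t + (l * (w \<bullet> w) - w \<bullet> (K *v w)) * t^2"
      using attained
      by (simp add: w_def matrix_vector_right_distrib matrix_vector_mult_scaleR inner_add_left
          inner_add_right inner_diff_left inner_diff_right inner_commute power2_eq_square algebra_simps)
    with bound[of "v + t *\<^sub>R w"] show ?thesis
      by linarith
  qed
  then have "2 * (w \<bullet> w) = 0"
    by (rule nonneg_quadratic_imp_linear_coeff_eq_0)
  then show ?thesis
    by (simp add: w_def scalar_mult_eq_scaleR)
qed

lemma symmetric_matrix_real_eigenvalues_nonempty:
  fixes K :: "real^'n^'n"
  assumes sym: "transpose K = K"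
  shows "real_eigenvalues K \<noteq> {}"
proof -
  define Q where "Q x = x \<bullet> (K *v x)" for x :: "real^'n"
  have "sphere (0 :: real^'n) 1 \<noteq> {}"
    by (simp add: sphere_eq_empty)
  moreover have "continuous_on (sphere 0 1) Q"
    unfolding Q_def by (intro continuous_intros)
  ultimately obtain v where v: "v \<in> sphere 0 1" and v_max: "\<And>y. y \<in> sphere 0 1 \<Longrightarrow> Q y \<le> Q v"
    using continuous_attains_sup[OF compact_sphere] by blast
  have "Q x \<le> Q v * (x \<bullet> x)" for x
  proof (cases "x = 0")
    case False
    have "Q ((1 / norm x) *\<^sub>R x) \<le> Q v"
      using False by (intro v_max) simp
    then show ?thesis
      using False by (simp add: Q_def matrix_vector_mult_scaleR field_simps dot_square_norm power2_eq_square)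
  qed (simp add: Q_def)
  moreover have "Q v = Q v * (v \<bullet> v)"
    using v by (simp add: dot_square_norm)
  ultimately have "K *v v = Q v *s v"
    unfolding Q_def by (intro Rayleigh_bound_attained_imp_eigenvector[OF sym]) auto
  moreover have "v \<noteq> 0"
    using v by auto
  ultimately show ?thesis
    unfolding real_eigenvalues_def by blast
qed

lemma symmetric_matrix_eigenvectors_orthogonal:
  fixes K :: "real^'n^'n"
  assumes sym: "transpose K = K" and "K *v x = l *s x" and "K *v y = m *s y" and "l \<noteq> m"
  shows "x \<bullet> y = 0"
proof -
  have "l * (x \<bullet> y) = (K *v x) \<bullet> y"
    using assms(2) by (simp add: scalar_mult_eq_scaleR)
  also have "\<dots> = x \<bullet> (K *v y)"
    by (rule symmetric_matrix_inner[OF sym])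
  also have "\<dots> = m * (x \<bullet> y)"
    using assms(3) by (simp add: scalar_mult_eq_scaleR)
  finally show ?thesis
    using \<open>l \<noteq> m\<close> by simp
qed

lemma symmetric_matrix_real_eigenvalues_finite:
  fixes K :: "real^'n^'n"
  assumes sym: "transpose K = K"
  shows "finite (real_eigenvalues K)"
proof -
  define u where "u l = (SOME v. v \<noteq> 0 \<and> K *v v = l *s v)" for l
  have u: "u l \<noteq> 0 \<and> K *v u l = l *s u l" if "l \<in> real_eigenvalues K" for l
    using that unfolding real_eigenvalues_def u_def mem_Collect_eq by (rule someI_ex)
  have orth: "u l \<bullet> u m = 0" if "l \<in> real_eigenvalues K" "m \<in> real_eigenvalues K" "l \<noteq> m" for l m
    using symmetric_matrix_eigenvectors_orthogonal[OF sym] u that by blast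
  have "inj_on u (real_eigenvalues K)"
    by (rule inj_onI) (metis orth u inner_eq_zero_iff)
  moreover have "independent (u ` real_eigenvalues K)"
    by (rule pairwise_orthogonal_independent) (auto simp: pairwise_def orthogonal_def u intro!: orth)
  then have "finite (u ` real_eigenvalues K)"
    using independent_bound by blast
  ultimately show ?thesis
    using finite_imageD by blast
qed

definition vec_Re :: "complex^'n \<Rightarrow> real^'n" where
  "vec_Re v = (\<chi> i. Re (v $ i))"

definition vec_Im :: "complex^'n \<Rightarrow> real^'n" where
  "vec_Im v = (\<chi> i. Im (v $ i))"

lemma vec_Re_cmat_mult: "vec_Re (cmat K *v v) = K *v vec_Re v"
  by (simp add: vec_eq_iff vec_Re_def cmat_def matrix_vector_mult_def)

lemma vec_Im_cmat_mult: "vec_Im (cmat K *v v) = K *v vec_Im v"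
  by (simp add: vec_eq_iff vec_Im_def cmat_def matrix_vector_mult_def)

lemma vec_Re_scale: "vec_Re (c *s v) = Re c *s vec_Re v - Im c *s vec_Im v"
  by (simp add: vec_eq_iff vec_Re_def vec_Im_def)

lemma vec_Im_scale: "vec_Im (c *s v) = Im c *s vec_Re v + Re c *s vec_Im v"
  by (simp add: vec_eq_iff vec_Re_def vec_Im_def)

lemma vec_Re_Im_eq_0_iff: "vec_Re v = 0 \<and> vec_Im v = 0 \<longleftrightarrow> v = 0"
  by (auto simp: vec_eq_iff vec_Re_def vec_Im_def complex_eq_iff)

lemma cmat_eigenvalue_in_real_eigenvalues:
  fixes K :: "real^'n^'n"
  assumes sym: "transpose K = K" and "v \<noteq> 0" and eig: "cmat K *v v = \<mu> *s v"
  shows "\<mu> \<in> of_real ` real_eigenvalues K"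
proof -
  define x y where "x = vec_Re v" and "y = vec_Im v"
  have Kx: "K *v x = Re \<mu> *\<^sub>R x - Im \<mu> *\<^sub>R y" and Ky: "K *v y = Im \<mu> *\<^sub>R x + Re \<mu> *\<^sub>R y"
    using arg_cong[OF eig, of vec_Re] arg_cong[OF eig, of vec_Im]
    by (simp_all add: x_def y_def vec_Re_cmat_mult vec_Im_cmat_mult vec_Re_scale vec_Im_scale
        scalar_mult_eq_scaleR)
  have "(K *v x) \<bullet> y = x \<bullet> (K *v y)"
    by (rule symmetric_matrix_inner[OF sym])
  then have "Im \<mu> * (x \<bullet> x + y \<bullet> y) = 0"
    unfolding Kx Ky by (simp add: inner_diff_left inner_add_right inner_commute algebra_simps)
  moreover have "x \<noteq> 0 \<or> y \<noteq> 0"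
    using \<open>v \<noteq> 0\<close> vec_Re_Im_eq_0_iff by (auto simp: x_def y_def)
  then have "x \<bullet> x + y \<bullet> y > 0"
    by (auto intro: add_pos_nonneg add_nonneg_pos)
  ultimately have "Im \<mu> = 0"
    by simp
  then have "K *v x = Re \<mu> *s x" "K *v y = Re \<mu> *s y"
    using Kx Ky by (simp_all add: scalar_mult_eq_scaleR)
  with \<open>x \<noteq> 0 \<or> y \<noteq> 0\<close> have "Re \<mu> \<in> real_eigenvalues K"
    unfolding real_eigenvalues_def by blast
  moreover have "\<mu> = of_real (Re \<mu>)"
    using \<open>Im \<mu> = 0\<close> by (simp add: complex_eq_iff)
  ultimately show ?thesis
    by blast
qed

lemma cmat_eigenvalues_eq:
  fixes K :: "real^'n^'n"
  assumes sym: "transpose K = K"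
  shows "(\<exists>v. v \<noteq> 0 \<and> cmat K *v v = \<mu> *s v) \<longleftrightarrow> \<mu> \<in> of_real ` real_eigenvalues K"
proof
  assume "\<mu> \<in> of_real ` real_eigenvalues K"
  then obtain l x where "\<mu> = of_real l" "x \<noteq> 0" "K *v x = l *s x"
    unfolding real_eigenvalues_def by blast
  then have "(\<chi> i. of_real (x $ i)) \<noteq> 0 \<and> cmat K *v (\<chi> i. of_real (x $ i)) = \<mu> *s (\<chi> i. of_real (x $ i))"
    by (auto simp: vec_eq_iff cmat_def matrix_vector_mult_def simp flip: of_real_mult of_real_sum)
  then show "\<exists>v. v \<noteq> 0 \<and> cmat K *v v = \<mu> *s v" ..
qed (use cmat_eigenvalue_in_real_eigenvalues[OF sym] in blast)

lemma det_eq_0_iff_kernel: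
  fixes A :: "'a::field^'n^'n"
  shows "det A = 0 \<longleftrightarrow> (\<exists>v. v \<noteq> 0 \<and> A *v v = 0)"
  using invertible_det_nz[of A] invertible_left_inverse[of A] matrix_left_invertible_ker[of A]
  by blast

lemma mat_mult_vector: "mat c *v v = c *s v"
  by (simp add: vec_eq_iff matrix_vector_mult_def mat_def if_distrib[where f="\<lambda>t. t * _"] sum.delta
      cong: if_cong)

(* The eigenvector hypothesis is needed only for \<beta> = 0, where det (mat \<alpha>) = 0 forces
   \<alpha> = 0 and any eigenvalue witnesses the right-hand side. *)
lemma det_mat_plus_mat_mult_eq_0_iff:
  fixes A :: "'a::field^'n^'n"
  assumes "\<exists>\<mu> v. v \<noteq> 0 \<and> A *v v = \<mu> *s v"
  shows "det (mat \<alpha> + mat \<beta> ** A) = 0 \<longleftrightarrow>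
         (\<exists>\<mu>. (\<exists>v. v \<noteq> 0 \<and> A *v v = \<mu> *s v) \<and> \<alpha> + \<beta> * \<mu> = 0)"
proof -
  have apply_eq: "(mat \<alpha> + mat \<beta> ** A) *v v = \<alpha> *s v + \<beta> *s (A *v v)" for v
    by (simp add: matrix_vector_mult_add_rdistrib matrix_vector_mul_assoc[symmetric] mat_mult_vector)
  show ?thesis
  proof
    assume "det (mat \<alpha> + mat \<beta> ** A) = 0"
    then obtain v where "v \<noteq> 0" and v: "\<alpha> *s v + \<beta> *s (A *v v) = 0"
      by (auto simp: det_eq_0_iff_kernel apply_eq)
    show "\<exists>\<mu>. (\<exists>v. v \<noteq> 0 \<and> A *v v = \<mu> *s v) \<and> \<alpha> + \<beta> * \<mu> = 0"
    proof (cases "\<beta> = 0")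
      case True
      then have "\<alpha> = 0"
        using v \<open>v \<noteq> 0\<close> by simp
      with True assms show ?thesis
        by simp
    next
      case False
      then have "A *v v = (- \<alpha> / \<beta>) *s v"
        using v by (simp add: vec_eq_iff field_simps add_eq_0_iff)
      moreover have "\<alpha> + \<beta> * (- \<alpha> / \<beta>) = 0"
        using False by simp
      ultimately show ?thesis
        using \<open>v \<noteq> 0\<close> by blast
    qed
  next
    assume "\<exists>\<mu>. (\<exists>v. v \<noteq> 0 \<and> A *v v = \<mu> *s v) \<and> \<alpha> + \<beta> * \<mu> = 0"
    then obtain \<mu> v where "v \<noteq> 0" "A *v v = \<mu> *s v" "\<alpha> + \<beta> * \<mu> = 0"
      by blast
    then have "(mat \<alpha> + mat \<beta> ** A) *v v = 0"
      by (simp add: apply_eq vector_smult_assoc flip: vector_sadd_rdistrib)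
    with \<open>v \<noteq> 0\<close> show "det (mat \<alpha> + mat \<beta> ** A) = 0"
      by (auto simp: det_eq_0_iff_kernel)
  qed
qed

lemma dsr_char_matrix_eq:
  "dsr_char_matrix a b dt K z =
     mat ((z - 1)^2) + mat (z * of_real (a * b * dt + b) - of_real b) ** cmat K"
  unfolding matrix_eq dsr_char_matrix_def matrix_vector_mult_add_rdistrib
    matrix_vector_mult_diff_rdistrib matrix_vector_mul_assoc[symmetric] mat_mult_vector
    matrix_vector_mul_lid vector_scalar_commute
  by (simp add: vec_eq_iff power2_eq_square algebra_simps)

lemma det_dsr_char_matrix_eq_0_iff:
  fixes K :: "real^'n^'n"
  assumes sym: "transpose K = K"
  shows "det (dsr_char_matrix a b dt K z) = 0 \<longleftrightarrow>
    (\<exists>l \<in> real_eigenvalues K.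
       z^2 + of_real (l * (a * b * dt + b) - 2) * z + of_real (1 - l * b) = 0)"
proof -
  have eigenvector: "\<exists>\<mu> v. v \<noteq> 0 \<and> cmat K *v v = \<mu> *s v"
    using symmetric_matrix_real_eigenvalues_nonempty[OF sym] cmat_eigenvalues_eq[OF sym] by blast
  have "det (dsr_char_matrix a b dt K z) = 0 \<longleftrightarrow>
      (\<exists>l \<in> real_eigenvalues K. (z - 1)^2 + (z * of_real (a * b * dt + b) - of_real b) * of_real l = 0)"
    unfolding dsr_char_matrix_eq det_mat_plus_mat_mult_eq_0_iff[OF eigenvector] cmat_eigenvalues_eq[OF sym]
    by blast
  also have "\<dots> \<longleftrightarrow> (\<exists>l \<in> real_eigenvalues K.
       z^2 + of_real (l * (a * b * dt + b) - 2) * z + of_real (1 - l * b) = 0)"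
    by (intro bex_cong refl arg_cong[where f="\<lambda>t. t = 0"]) (simp add: power2_eq_square algebra_simps)
  finally show ?thesis .
qed

lemma dsr_scalar_stable_iff:
  fixes l a b dt :: real
  assumes l: "l > 0" and dt: "dt > 0"
  shows "(\<forall>z::complex. z^2 + of_real (l * (a * b * dt + b) - 2) * z + of_real (1 - l * b) = 0
            \<longrightarrow> cmod z < 1) \<longleftrightarrow>
         a > 0 \<and> b > 0 \<and> l * b * (a * dt + 2) < 4"
proof -
  have "(\<forall>z::complex. z^2 + of_real (l * (a * b * dt + b) - 2) * z + of_real (1 - l * b) = 0
            \<longrightarrow> cmod z < 1) \<longleftrightarrow>
        0 < l * b \<and> l * b < 2 \<and> 0 < l * (a * b * dt) \<and> l * b * (a * dt + 2) < 4"
    unfolding monic_quadratic_roots_in_unit_disc_iff by (auto simp: abs_less_iff algebra_simps)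
  also have "\<dots> \<longleftrightarrow> a > 0 \<and> b > 0 \<and> l * b * (a * dt + 2) < 4"
  proof safe
    assume "0 < l * b" "0 < l * (a * b * dt)"
    then show "b > 0" "a > 0"
      using l dt by (simp_all add: zero_less_mult_iff)
  next
    assume "a > 0" "b > 0" "l * b * (a * dt + 2) < 4"
    then show "0 < l * b" "0 < l * (a * b * dt)"
      using l dt by simp_all
    have "l * b * 2 < l * b * (a * dt + 2)"
      using \<open>a > 0\<close> \<open>b > 0\<close> l dt by simp
    with \<open>l * b * (a * dt + 2) < 4\<close> show "l * b < 2"
      by linarith
  qed
  finally show ?thesis .
qed

lemma forall_mult_less_iff_Max:
  fixes E :: "real set" and b c d :: real
  assumes "finite E" "E \<noteq> {}" "\<forall>l\<in>E. l > 0" "b > 0" "c > 0"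
  shows "(\<forall>l\<in>E. l * b * c < d) \<longleftrightarrow> b < d / (Max E * c)"
proof -
  have "Max E > 0"
    using assms Max_in by blast
  have "(\<forall>l\<in>E. l * b * c < d) \<longleftrightarrow> Max E * b * c < d"
  proof
    show "\<forall>l\<in>E. l * b * c < d" if "Max E * b * c < d"
    proof
      fix l assume "l \<in> E"
      then have "l * b * c \<le> Max E * b * c"
        using assms by (simp add: mult_right_mono)
      with that show "l * b * c < d"
        by linarith
    qed
  qed (use assms Max_in in blast)
  also have "\<dots> \<longleftrightarrow> b < d / (Max E * c)"
    using \<open>Max E > 0\<close> \<open>c > 0\<close> by (simp add: pos_less_divide_eq mult_ac)
  finally show ?thesis .
qed

theorem lemma1:
  fixes K :: "real^'n^'n" and B :: "real^'n" and alpha beta dt :: real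
  assumes dt_pos: "dt > 0"
    and K_sym: "transpose K = K"
    and K_pos: "\<forall>l \<in> real_eigenvalues K. l > 0"
  shows "dsr_stable alpha beta dt K \<longleftrightarrow>
           alpha > 0 \<and> 0 < beta \<and>
           beta < 4 / (max_eigenvalue K * (alpha * dt + 2))"
proof -
  let ?E = "real_eigenvalues K"
  have E: "finite ?E" "?E \<noteq> {}"
    using symmetric_matrix_real_eigenvalues_finite[OF K_sym]
      symmetric_matrix_real_eigenvalues_nonempty[OF K_sym] by simp_all
  have "dsr_stable alpha beta dt K \<longleftrightarrow>
      (\<forall>l\<in>?E. \<forall>z::complex. z^2 + of_real (l * (alpha * beta * dt + beta) - 2) * z
                                + of_real (1 - l * beta) = 0 \<longrightarrow> cmod z < 1)"
    unfolding dsr_stable_def det_dsr_char_matrix_eq_0_iff[OF K_sym] by blast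
  also have "\<dots> \<longleftrightarrow> (\<forall>l\<in>?E. alpha > 0 \<and> beta > 0 \<and> l * beta * (alpha * dt + 2) < 4)"
    using K_pos dt_pos by (intro ball_cong refl dsr_scalar_stable_iff) auto
  also have "\<dots> \<longleftrightarrow> alpha > 0 \<and> beta > 0 \<and> (\<forall>l\<in>?E. l * beta * (alpha * dt + 2) < 4)"
    using E(2) by blast
  also have "\<dots> \<longleftrightarrow> alpha > 0 \<and> 0 < beta \<and> beta < 4 / (max_eigenvalue K * (alpha * dt + 2))"
    using forall_mult_less_iff_Max[OF E K_pos, of beta "alpha * dt + 2" 4] dt_pos
    by (auto simp: max_eigenvalue_def add_pos_pos)
  finally show ?thesis .
qed

end
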